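(* Let $n\ge 1$ and $0\le p\le n-1$. The set $\mathcal{D}_p$ of permutations of $[n]$ at distance exactly $p$ from the identity (i.e., obtainable from $12\cdots n$ by $p$ right-jumps but not by fewer) is exactly the set of permutations of $[n]$ having exactly $p$ non-left-to-right-maxima. Consequently, the number $d_{n,p}$ of such permutations equals the signless Stirling number of the first kind $s(n,n-p)$ (the number of permutations of $[n]$ with exactly $n-p$ cycles), and $$d_{n,p}=\sum_{0\le j\le h\le p}(-1)^j\binom{h}{j}\binom{n-1+h}{p+h}\binom{n+p}{p-h}\frac{(j-h)^{p+h}}{h!}.$$
   Context: Permutations of $[n]=\{1,\dots,n\}$ are written as words $\sigma=\sigma_1\sigma_2\cdots\sigma_n$. A right-jump transforms $\sigma$ into $\sigma_1\cdots\sigma_{i-1}\sigma_{i+1}\cdots\sigma_j\sigma_i\sigma_{j+1}\cdots\sigma_n$ for some $1\le i<j\le n$. A left-to-right maximum of $\sigma$ is an entry $\sigma_i$ such that $\sigma_k<\sigma_i$ for all $k<i$; every other entry is called a non-left-to-right-maximum. *)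

theory Defs
  imports Complex_Main "HOL-Combinatorics.Stirling" "HOL-Combinatorics.Multiset_Permutations"
begin

text \<open>Permutations of [n] are words: lists xs with distinct xs and set xs = {1..n}
  (library: permutations_of_set {1..n}).  Positions are 0-indexed.\<close>

text \<open>Right-jump at (0-indexed) positions i < j: the entry at position i is removed
  and reinserted directly after the entry originally at position j.\<close>
definition right_jump :: "'a list \<Rightarrow> nat \<Rightarrow> nat \<Rightarrow> 'a list" where
  "right_jump xs i j = take i xs @ take (j - i) (drop (Suc i) xs) @ [xs ! i] @ drop (Suc j) xs"

definition rj_step :: "'a list \<Rightarrow> 'a list \<Rightarrow> bool" where
  "rj_step xs ys \<longleftrightarrow> (\<exists>i j. i < j \<and> j < length xs \<and> ys = right_jump xs i j)"

definition id_perm :: "nat \<Rightarrow> nat list" where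
  "id_perm n = [1..<Suc n]"

definition D :: "nat \<Rightarrow> nat \<Rightarrow> nat list set" where
  "D n p = {\<sigma> \<in> permutations_of_set {1..n}.
              (rj_step ^^ p) (id_perm n) \<sigma> \<and> (\<forall>k<p. \<not> (rj_step ^^ k) (id_perm n) \<sigma>)}"

definition non_lrmax :: "nat list \<Rightarrow> nat" where
  "non_lrmax xs = card {i. i < length xs \<and> \<not> (\<forall>k<i. xs ! k < xs ! i)}"

end

theory Submission
  imports Defs "HOL-Computational_Algebra.Polynomial"
begin

text \<open>A right-jump creates at most one new non-left-to-right maximum (the moved entry), so a
  permutation at distance p has at most p of them. Conversely, if x is the first
  non-left-to-right maximum and b the first earlier entry exceeding x, moving x back in front
  of b removes exactly one, and undoing this move is a right-jump; by induction a permutation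
  with p non-left-to-right maxima is reachable in p jumps. Deleting the last entry of a
  permutation, which is a left-to-right maximum iff it is the largest, yields the recursion
  of s(n, k) for the number of permutations with k left-to-right maxima.

  For the closed formula, replace n by a variable x: the right-hand side becomes a polynomial
  F_p of degree at most 2p, vanishing at 0, ..., p and equal to the Stirling number of the
  second kind S(p + m, m) at -m for m \<le> p. Together with the values of F_(p-1) this yields
  F_p(x + 1) = F_p(x) + x F_(p-1)(x) at the 2p points -p, ..., p - 1, hence identically, and
  this is the recursion s(n + 1, n + 1 - p) = s(n, n - p) + n s(n, n + 1 - p).\<close>

section \<open>Non-left-to-right maxima\<close>

text \<open>S plays the role of the set of entries preceding xs.\<close>
fun non_lrmax_after :: "'a::linorder set \<Rightarrow> 'a list \<Rightarrow> nat" where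
  "non_lrmax_after S [] = 0"
| "non_lrmax_after S (x # xs) = (if \<forall>y\<in>S. y < x then 0 else 1) + non_lrmax_after (insert x S) xs"

fun lrmax_after :: "'a::linorder set \<Rightarrow> 'a list \<Rightarrow> nat" where
  "lrmax_after S [] = 0"
| "lrmax_after S (x # xs) = (if \<forall>y\<in>S. y < x then 1 else 0) + lrmax_after (insert x S) xs"

lemma non_lrmax_after_add_lrmax_after: "non_lrmax_after S xs + lrmax_after S xs = length xs"
  by (induction xs arbitrary: S) auto

lemma non_lrmax_after_append:
  "non_lrmax_after S (xs @ ys) = non_lrmax_after S xs + non_lrmax_after (S \<union> set xs) ys"
  by (induction xs arbitrary: S) auto

lemma lrmax_after_append: "lrmax_after S (xs @ ys) = lrmax_after S xs + lrmax_after (S \<union> set xs) ys"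
  by (induction xs arbitrary: S) auto

lemma non_lrmax_after_mono: "S \<subseteq> T \<Longrightarrow> non_lrmax_after S xs \<le> non_lrmax_after T xs"
proof (induction xs arbitrary: S T)
  case (Cons x xs)
  then have "non_lrmax_after (insert x S) xs \<le> non_lrmax_after (insert x T) xs"
    by (meson insert_mono)
  with Cons.prems show ?case by auto
qed simp

lemma non_lrmax_after_insert_dominated:
  "x < b \<Longrightarrow> b \<in> S \<Longrightarrow> non_lrmax_after (insert x S) xs = non_lrmax_after S xs"
proof (induction xs arbitrary: S)
  case (Cons z xs)
  then have "non_lrmax_after (insert z (insert x S)) xs = non_lrmax_after (insert z S) xs"
    by (simp add: insert_commute)
  moreover have "(\<forall>y\<in>insert x S. y < z) \<longleftrightarrow> (\<forall>y\<in>S. y < z)"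
    using Cons.prems by auto
  ultimately show ?case by simp
qed simp

lemma non_lrmax_after_eq_0_iff:
  "non_lrmax_after S xs = 0 \<longleftrightarrow> sorted_wrt (<) xs \<and> (\<forall>y\<in>S. \<forall>x\<in>set xs. y < x)"
  by (induction xs arbitrary: S) auto

lemma card_less_filter_eq_sum: "card {i. i < (n::nat) \<and> P i} = (\<Sum>i<n. if P i then 1 else 0)"
proof -
  have "{i. i < n \<and> P i} = {i \<in> {..<n}. P i}" by auto
  then show ?thesis
    using sum.inter_filter[of "{..<n}" "\<lambda>_. 1::nat" P] by simp
qed

lemma non_lrmax_after_eq_card:
  "non_lrmax_after S xs =
     card {i. i < length xs \<and> \<not> ((\<forall>y\<in>S. y < xs ! i) \<and> (\<forall>k<i. xs ! k < xs ! i))}"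
proof (induction xs arbitrary: S)
  case (Cons x xs)
  have "non_lrmax_after (insert x S) xs =
    (\<Sum>i<length xs.
       if \<not> ((\<forall>y\<in>insert x S. y < xs ! i) \<and> (\<forall>k<i. xs ! k < xs ! i)) then 1 else 0)"
    using Cons.IH by (simp add: card_less_filter_eq_sum)
  then show ?case
    unfolding card_less_filter_eq_sum length_Cons sum.lessThan_Suc_shift
    by (simp add: All_less_Suc2)
qed simp

lemma non_lrmax_eq_non_lrmax_after: "non_lrmax xs = non_lrmax_after {} xs"
  unfolding non_lrmax_def non_lrmax_after_eq_card by simp

section \<open>Distance from the identity\<close>

lemma non_lrmax_after_move_right_le:
  "non_lrmax_after S (A @ B @ x # C) \<le> non_lrmax_after S (A @ x # B @ C) + 1"
proof -
  have "non_lrmax_after (S \<union> set A) B \<le> non_lrmax_after (insert x (S \<union> set A)) B"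
    by (rule non_lrmax_after_mono) auto
  moreover have "non_lrmax_after (S \<union> set A \<union> set B) [x] \<le> 1" by simp
  ultimately show ?thesis
    by (simp add: non_lrmax_after_append Un_assoc Un_commute Un_left_commute insert_commute)
qed

lemma right_jump_split:
  assumes "i < j" "j < length xs"
  obtains A B C where "xs = A @ xs ! i # B @ C" "right_jump xs i j = A @ B @ xs ! i # C"
proof
  let ?A = "take i xs" and ?B = "take (j - i) (drop (Suc i) xs)" and ?C = "drop (Suc j) xs"
  have "drop (Suc i) xs = ?B @ drop (j - i) (drop (Suc i) xs)"
    by (rule append_take_drop_id[symmetric])
  also have "drop (j - i) (drop (Suc i) xs) = ?C" using assms by simp
  finally show "xs = ?A @ xs ! i # ?B @ ?C"
    using id_take_nth_drop[of i xs] assms by simp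
  show "right_jump xs i j = ?A @ ?B @ xs ! i # ?C" unfolding right_jump_def by simp
qed

lemma non_lrmax_after_rj_step:
  assumes "rj_step xs ys"
  shows "non_lrmax_after S ys \<le> non_lrmax_after S xs + 1"
proof -
  obtain i j where ij: "i < j" "j < length xs" and ys: "ys = right_jump xs i j"
    using assms unfolding rj_step_def by blast
  obtain A B C where "xs = A @ xs ! i # B @ C" "right_jump xs i j = A @ B @ xs ! i # C"
    by (rule right_jump_split[OF ij])
  then show ?thesis using non_lrmax_after_move_right_le[of S A B "xs ! i" C] ys by simp
qed

lemma non_lrmax_after_id_perm: "non_lrmax_after {} (id_perm n) = 0"
  unfolding id_perm_def non_lrmax_after_eq_0_iff by (simp del: upt_Suc)

lemma non_lrmax_after_le_if_reachable:
  "(rj_step ^^ k) (id_perm n) \<sigma> \<Longrightarrow> non_lrmax_after {} \<sigma> \<le> k"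
proof (induction k arbitrary: \<sigma>)
  case 0
  then show ?case by (auto simp: non_lrmax_after_id_perm)
next
  case (Suc k)
  then obtain \<tau> where "(rj_step ^^ k) (id_perm n) \<tau>" "rj_step \<tau> \<sigma>" by auto
  with Suc.IH non_lrmax_after_rj_step[of \<tau> \<sigma> "{}"] show ?case by fastforce
qed

lemma non_lrmax_after_move_left:
  assumes "\<forall>y\<in>S \<union> set A. y < x" "x < b"
  shows "non_lrmax_after S (A @ b # B @ x # C) = Suc (non_lrmax_after S (A @ x # b # B @ C))"
proof -
  let ?S = "S \<union> set A"
  have "non_lrmax_after (insert b (insert x ?S)) B = non_lrmax_after (insert b ?S) B"
    using non_lrmax_after_insert_dominated[of x b "insert b ?S" B] assms by (simp add: insert_commute)
  with assms show ?thesis by (simp add: non_lrmax_after_append Un_assoc insert_commute)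
qed

lemma non_lrmax_after_pos_split:
  "0 < non_lrmax_after S xs \<Longrightarrow> \<exists>P x C. xs = P @ x # C \<and> \<not> (\<forall>y\<in>S \<union> set P. y < x)"
proof (induction xs arbitrary: S)
  case (Cons a xs)
  show ?case
  proof (cases "\<forall>y\<in>S. y < a")
    case True
    then have "0 < non_lrmax_after (insert a S) xs" using Cons.prems by simp
    then obtain P x C where "xs = P @ x # C" "\<not> (\<forall>y\<in>insert a S \<union> set P. y < x)"
      using Cons.IH by blast
    then show ?thesis by (intro exI[of _ "a # P"]) auto
  qed (intro exI[of _ "[]"], auto)
qed simp

lemma rj_step_from_fewer_non_lrmax:
  assumes "\<sigma> \<in> permutations_of_set X" "non_lrmax_after {} \<sigma> = Suc p"
  obtains \<tau> where "\<tau> \<in> permutations_of_set X" "non_lrmax_after {} \<tau> = p" "rj_step \<tau> \<sigma>"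
proof -
  obtain P x C where \<sigma>: "\<sigma> = P @ x # C" and not_max: "\<not> (\<forall>y\<in>set P. y < x)"
    using non_lrmax_after_pos_split[of "{}" \<sigma>] assms(2) by auto
  define A where "A = takeWhile (\<lambda>y. y < x) P"
  have "dropWhile (\<lambda>y. y < x) P \<noteq> []"
    using not_max by (simp add: dropWhile_eq_Nil_conv)
  then obtain b B where bB: "dropWhile (\<lambda>y. y < x) P = b # B"
    by (metis list.exhaust)
  have P: "P = A @ b # B"
    unfolding A_def using takeWhile_dropWhile_id[of "\<lambda>y. y < x" P] bB by simp
  have "\<not> b < x" using bB by (simp add: dropWhile_eq_Cons_conv)
  moreover have "x \<notin> set P" using permutations_of_setD(2)[OF assms(1)] \<sigma> by simp
  ultimately have "x < b" using P by auto
  have A_less: "\<forall>y\<in>set A. y < x" unfolding A_def by (auto dest: set_takeWhileD)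
  define \<tau> where "\<tau> = A @ x # b # B @ C"
  have \<sigma>': "\<sigma> = A @ b # B @ x # C" using \<sigma> P by simp
  show thesis
  proof
    show "\<tau> \<in> permutations_of_set X"
      using permutations_of_setD[OF assms(1)] unfolding \<sigma>' \<tau>_def
      by (intro permutations_of_setI) auto
    show "non_lrmax_after {} \<tau> = p"
      using assms(2) non_lrmax_after_move_left[of "{}" A x b B C] A_less \<open>x < b\<close>
      unfolding \<sigma>' \<tau>_def by simp
    have "right_jump \<tau> (length A) (length A + length (b # B)) = \<sigma>"
      unfolding right_jump_def \<tau>_def \<sigma>' by simp
    moreover have "length A + length (b # B) < length \<tau>" unfolding \<tau>_def by simp
    ultimately show "rj_step \<tau> \<sigma>" unfolding rj_step_def
      by (intro exI[of _ "length A"] exI[of _ "length A + length (b # B)"]) simp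
  qed
qed

lemma eq_id_perm_if_non_lrmax_after_0:
  assumes "\<sigma> \<in> permutations_of_set {1..n}" "non_lrmax_after {} \<sigma> = 0"
  shows "\<sigma> = id_perm n"
proof (rule sorted_distinct_set_unique)
  show "sorted \<sigma>" "distinct \<sigma>"
    using assms(2) by (simp_all add: non_lrmax_after_eq_0_iff strict_sorted_iff)
  show "set \<sigma> = set (id_perm n)"
    using assms(1) unfolding permutations_of_set_def id_perm_def
    by (simp add: atLeastLessThanSuc_atLeastAtMost del: upt_Suc)
qed (simp_all add: id_perm_def del: upt_Suc)

lemma reachable_if_non_lrmax_after:
  "\<sigma> \<in> permutations_of_set {1..n} \<Longrightarrow> non_lrmax_after {} \<sigma> = p
    \<Longrightarrow> (rj_step ^^ p) (id_perm n) \<sigma>"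
proof (induction p arbitrary: \<sigma>)
  case 0
  then show ?case using eq_id_perm_if_non_lrmax_after_0 by auto
next
  case (Suc p)
  then obtain \<tau> where
    "\<tau> \<in> permutations_of_set {1..n}" "non_lrmax_after {} \<tau> = p" "rj_step \<tau> \<sigma>"
    by (blast elim: rj_step_from_fewer_non_lrmax)
  with Suc.IH show ?case by (blast intro: relpowp_Suc_I)
qed

lemma D_eq_non_lrmax: "D n p = {\<sigma> \<in> permutations_of_set {1..n}. non_lrmax \<sigma> = p}"
proof -
  have "(rj_step ^^ p) (id_perm n) \<sigma> \<and> (\<forall>k<p. \<not> (rj_step ^^ k) (id_perm n) \<sigma>)
      \<longleftrightarrow> non_lrmax_after {} \<sigma> = p" if "\<sigma> \<in> permutations_of_set {1..n}" for \<sigma>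
    using non_lrmax_after_le_if_reachable reachable_if_non_lrmax_after[OF that]
    by (meson le_antisym not_le)
  then show ?thesis unfolding D_def non_lrmax_eq_non_lrmax_after by blast
qed

section \<open>Counting by left-to-right maxima\<close>

lemma permutations_of_set_snoc:
  assumes "A \<noteq> {}"
  shows "permutations_of_set A = (\<Union>x\<in>A. (\<lambda>xs. xs @ [x]) ` permutations_of_set (A - {x}))"
proof (intro equalityI subsetI)
  fix xs assume xs: "xs \<in> permutations_of_set A"
  then have "xs \<noteq> []" using assms by (auto simp: permutations_of_set_def)
  then obtain ys x where xs_eq: "xs = ys @ [x]" by (metis rev_exhaust)
  with permutations_of_setD[OF xs] have "ys \<in> permutations_of_set (A - {x})" "x \<in> A"
    by (auto intro!: permutations_of_setI)
  with xs_eq show "xs \<in> (\<Union>x\<in>A. (\<lambda>xs. xs @ [x]) ` permutations_of_set (A - {x}))"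
    by blast
next
  fix xs assume "xs \<in> (\<Union>x\<in>A. (\<lambda>xs. xs @ [x]) ` permutations_of_set (A - {x}))"
  then obtain x ys where "x \<in> A" "ys \<in> permutations_of_set (A - {x})" "xs = ys @ [x]"
    by blast
  then show "xs \<in> permutations_of_set A"
    using permutations_of_setD[of ys] by (intro permutations_of_setI) auto
qed

lemma less_all_but_iff_eq_Max:
  fixes A :: "'a::linorder set"
  assumes "finite A" "x \<in> A"
  shows "(\<forall>y\<in>A - {x}. y < x) \<longleftrightarrow> x = Max A"
proof
  assume "\<forall>y\<in>A - {x}. y < x"
  then show "x = Max A" using assms by (intro Max_eqI[symmetric]) (auto simp: le_less)
next
  assume "x = Max A"
  then show "\<forall>y\<in>A - {x}. y < x" using assms(1) by (auto simp: le_neq_trans)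
qed

lemma lrmax_after_snoc_permutation:
  assumes "finite A" "x \<in> A" "ys \<in> permutations_of_set (A - {x})"
  shows "lrmax_after {} (ys @ [x]) = lrmax_after {} ys + of_bool (x = Max A)"
  using less_all_but_iff_eq_Max[OF assms(1,2)] permutations_of_setD(1)[OF assms(3)]
  by (simp add: lrmax_after_append)

lemma card_lrmax_after_eq_stirling:
  fixes A :: "'a::linorder set"
  assumes "finite A"
  shows "card {xs \<in> permutations_of_set A. lrmax_after {} xs = k} = stirling (card A) k"
  using assms
proof (induction "card A" arbitrary: A k)
  case 0
  then show ?case by (cases k) (auto simp: Collect_conv_if)
next
  case (Suc m)
  define M where "M = Max A"
  have card_A: "card A = Suc m" using Suc by simp
  then have "A \<noteq> {}" by auto
  then have "M \<in> A" unfolding M_def using \<open>finite A\<close> by simp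
  define T where "T x = {ys \<in> permutations_of_set (A - {x}). lrmax_after {} ys + of_bool (x = M) = k}"
    for x
  have "{xs \<in> permutations_of_set A. lrmax_after {} xs = k} = (\<Union>x\<in>A. (\<lambda>ys. ys @ [x]) ` T x)"
    unfolding permutations_of_set_snoc[OF \<open>A \<noteq> {}\<close>] T_def M_def
    using lrmax_after_snoc_permutation[OF \<open>finite A\<close>] by auto
  then have "card {xs \<in> permutations_of_set A. lrmax_after {} xs = k}
      = (\<Sum>x\<in>A. card ((\<lambda>ys. ys @ [x]) ` T x))"
    using \<open>finite A\<close> by (simp only:) (intro card_UN_disjoint, auto simp: T_def)
  also have "\<dots> = (\<Sum>x\<in>A. card (T x))"
    by (intro sum.cong refl card_image) (simp add: inj_on_def)
  also have "\<dots> = card (T M) + (\<Sum>x\<in>A - {M}. card (T x))"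
    using \<open>finite A\<close> \<open>M \<in> A\<close> by (simp add: sum.remove)
  also have "card (T M) = (case k of 0 \<Rightarrow> 0 | Suc j \<Rightarrow> stirling m j)"
    using Suc \<open>M \<in> A\<close> card_A by (cases k) (simp_all add: T_def)
  also have "(\<Sum>x\<in>A - {M}. card (T x)) = (\<Sum>x\<in>A - {M}. stirling m k)"
    using Suc card_A by (intro sum.cong) (auto simp: T_def)
  also have "\<dots> = m * stirling m k" using card_A \<open>M \<in> A\<close> \<open>finite A\<close> by simp
  also have "(case k of 0 \<Rightarrow> 0 | Suc j \<Rightarrow> stirling m j) + m * stirling m k = stirling (Suc m) k"
    by (cases k; cases m) auto
  finally show ?case using Suc by simp
qed

lemma card_non_lrmax_eq_stirling:
  assumes "p \<le> n"
  shows "card {\<sigma> \<in> permutations_of_set {1..n}. non_lrmax \<sigma> = p} = stirling n (n - p)"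
proof -
  have "non_lrmax \<sigma> = p \<longleftrightarrow> lrmax_after {} \<sigma> = n - p"
    if "\<sigma> \<in> permutations_of_set {1..n}" for \<sigma>
  proof -
    have "length \<sigma> = n"
      using permutations_of_setD[OF that] by (metis card_atLeastAtMost diff_Suc_1 distinct_card)
    with non_lrmax_after_add_lrmax_after[of "{}" \<sigma>] assms
    show ?thesis by (auto simp: non_lrmax_eq_non_lrmax_after)
  qed
  then show ?thesis
    using card_lrmax_after_eq_stirling[of "{1..n}" "n - p"] by (simp cong: conj_cong)
qed

section \<open>The closed formula\<close>

text \<open>By inclusion-exclusion, the number of surjections from an a-set onto an m-set.\<close>
definition surj_sum :: "nat \<Rightarrow> nat \<Rightarrow> real" where
  "surj_sum a m = (\<Sum>j\<le>m. (-1) ^ j * real (m choose j) * real (m - j) ^ a)"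

lemma surj_sum_0: "surj_sum 0 m = of_bool (m = 0)"
  unfolding surj_sum_def using choose_alternating_sum[of m, where 'a = real] by (cases "m = 0") auto

lemma surj_sum_Suc_0: "surj_sum (Suc a) 0 = 0"
  unfolding surj_sum_def by simp

lemma surj_sum_Suc_Suc: "surj_sum (Suc a) (Suc m) = real (Suc m) * (surj_sum a (Suc m) + surj_sum a m)"
proof -
  define U where "U = (\<Sum>j\<le>Suc m. (-1) ^ j * real (m choose j) * real (Suc m - j) ^ a)"
  have "surj_sum (Suc a) (Suc m)
      = (\<Sum>j\<le>Suc m. (-1) ^ j * real ((Suc m - j) * (Suc m choose j)) * real (Suc m - j) ^ a)"
  proof -
    have "s * c * d ^ Suc a = s * (d * c) * d ^ a" for s c d :: real by (simp add: algebra_simps)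
    then show ?thesis unfolding surj_sum_def by (intro sum.cong refl) (simp only: of_nat_mult)
  qed
  also have "\<dots> = (\<Sum>j\<le>Suc m. (-1) ^ j * real (Suc m * (m choose j)) * real (Suc m - j) ^ a)"
    by (simp only: binomial_absorb_comp diff_Suc_1)
  also have "\<dots> = real (Suc m) * U"
    unfolding U_def by (simp add: sum_distrib_left algebra_simps)
  finally have "surj_sum (Suc a) (Suc m) = real (Suc m) * U" .
  moreover have "U = surj_sum a (Suc m) + surj_sum a m"
  proof -
    have "surj_sum a (Suc m) = real (Suc m) ^ a
        + (\<Sum>j\<le>m. (-1) ^ Suc j * real (Suc m choose Suc j) * real (m - j) ^ a)"
      unfolding surj_sum_def sum.atMost_Suc_shift by (simp del: binomial_Suc_Suc)
    also have "(\<Sum>j\<le>m. (-1) ^ Suc j * real (Suc m choose Suc j) * real (m - j) ^ a)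
        = (\<Sum>j\<le>m. (-1) ^ Suc j * real (m choose Suc j) * real (m - j) ^ a) - surj_sum a m"
      unfolding surj_sum_def sum_subtractf[symmetric] by (intro sum.cong refl) (simp add: algebra_simps)
    also have "real (Suc m) ^ a + ((\<Sum>j\<le>m. (-1) ^ Suc j * real (m choose Suc j) * real (m - j) ^ a)
        - surj_sum a m) = U - surj_sum a m"
      unfolding U_def sum.atMost_Suc_shift by simp
    finally show ?thesis by simp
  qed
  ultimately show ?thesis by simp
qed

lemma surj_sum_eq_fact_Stirling: "surj_sum a m = fact m * real (Stirling a m)"
proof (induction a arbitrary: m)
  case 0
  then show ?case by (simp add: surj_sum_0)
next
  case (Suc a)
  then show ?case
    by (cases m) (simp_all add: surj_sum_Suc_0 surj_sum_Suc_Suc algebra_simps)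
qed

lemma Stirling_alternating_sum:
  "(\<Sum>j=0..m. (-1) ^ j * real (m choose j) * (real j - real m) ^ (p + m) / fact m)
     = (-1) ^ (p + m) * real (Stirling (p + m) m)"
proof -
  have "(real j - real m) ^ (p + m) = (-1) ^ (p + m) * real (m - j) ^ (p + m)" if "j \<le> m" for j
    using that by (simp add: of_nat_diff flip: power_minus)
  then have "(\<Sum>j=0..m. (-1) ^ j * real (m choose j) * (real j - real m) ^ (p + m) / fact m)
      = (-1) ^ (p + m) / fact m * surj_sum (p + m) m"
    unfolding surj_sum_def atLeast0AtMost sum_distrib_left by (intro sum.cong refl) auto
  then show ?thesis by (simp add: surj_sum_eq_fact_Stirling)
qed

lemma degree_shift_diff_le:
  fixes q :: "'a::idom poly"
  shows "degree (pcompose q [:c, 1:] - q) \<le> degree q - 1"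
proof (cases "degree q = 0")
  case True
  then obtain a where "q = [:a:]" by (metis degree_0_id)
  then show ?thesis by simp
next
  case False
  let ?k = "degree q"
  have deg: "degree (pcompose q [:c, 1:]) = ?k" by (simp add: degree_pcompose)
  moreover have "coeff (pcompose q [:c, 1:]) ?k = coeff q ?k"
    using lead_coeff_comp[of "[:c, 1:]" q] deg by simp
  ultimately have "coeff (pcompose q [:c, 1:] - q) i = 0" if "?k - 1 < i" for i
    using that False by (cases "i = ?k") (simp_all add: coeff_eq_0)
  then show ?thesis by (rule degree_le[rule_format])
qed

definition gbinomial_poly :: "real \<Rightarrow> nat \<Rightarrow> real poly" where
  "gbinomial_poly a k = smult (1 / fact k) (\<Prod>i<k. [:a - real i, 1:])"

lemma poly_gbinomial_poly: "poly (gbinomial_poly a k) x = (x + a) gchoose k"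
  unfolding gbinomial_poly_def gbinomial_prod_rev
  by (simp add: poly_prod atLeast0LessThan algebra_simps divide_inverse)

lemma degree_gbinomial_poly: "degree (gbinomial_poly a k) \<le> k"
proof -
  have "degree (\<Prod>i<k. [:a - real i, 1:]) \<le> (\<Sum>i<k. degree [:a - real i, 1:])"
    using degree_prod_sum_le[of "{..<k}" "\<lambda>i. [:a - real i, 1:]"] by (simp add: o_def)
  also have "\<dots> = k" by simp
  finally show ?thesis unfolding gbinomial_poly_def using degree_smult_le order_trans by blast
qed

definition stirling_poly :: "nat \<Rightarrow> real poly" where
  "stirling_poly p = (\<Sum>h=0..p. \<Sum>j=0..h.
     smult ((-1) ^ j * real (h choose j) * (real j - real h) ^ (p + h) / fact h)
       (gbinomial_poly (real h - 1) (p + h) * gbinomial_poly (real p) (p - h)))"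

lemma poly_stirling_poly:
  "poly (stirling_poly p) x = (\<Sum>h=0..p. \<Sum>j=0..h. (-1) ^ j * real (h choose j)
     * ((x - 1 + real h) gchoose (p + h)) * ((x + real p) gchoose (p - h))
     * (real j - real h) ^ (p + h) / fact h)"
  unfolding stirling_poly_def by (simp add: poly_sum poly_gbinomial_poly algebra_simps)

lemma degree_stirling_poly: "degree (stirling_poly p) \<le> 2 * p"
  unfolding stirling_poly_def
proof (intro degree_sum_le)
  fix h j assume "h \<in> {0..p}"
  then have "h \<le> p" by simp
  then have "degree (gbinomial_poly (real h - 1) (p + h) * gbinomial_poly (real p) (p - h)) \<le> 2 * p"
    using degree_mult_le[of "gbinomial_poly (real h - 1) (p + h)" "gbinomial_poly (real p) (p - h)"]
      degree_gbinomial_poly[of "real h - 1" "p + h"] degree_gbinomial_poly[of "real p" "p - h"]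
    by linarith
  then show "degree (smult ((-1) ^ j * real (h choose j) * (real j - real h) ^ (p + h) / fact h)
      (gbinomial_poly (real h - 1) (p + h) * gbinomial_poly (real p) (p - h))) \<le> 2 * p"
    using degree_smult_le order_trans by blast
qed simp_all

lemma of_nat_gbinomial_eq_0: "k < j \<Longrightarrow> (of_nat k :: 'a::field_char_0) gchoose j = 0"
  by (simp flip: binomial_gbinomial)

lemma gbinomial_minus_one: "(-1 :: 'a::field_char_0) gchoose k = (-1) ^ k"
  using gbinomial_minus[of "1::'a" k] by (simp flip: binomial_gbinomial)

lemma poly_stirling_poly_0: "poly (stirling_poly 0) x = 1"
  by (simp add: poly_stirling_poly)

lemma poly_stirling_poly_of_nat_eq_0:
  assumes "1 \<le> p" "i \<le> p"
  shows "poly (stirling_poly p) (real i) = 0"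
  unfolding poly_stirling_poly
proof (intro sum.neutral ballI)
  fix h j assume "h \<in> {0..p}" "j \<in> {0..h}"
  show "(-1) ^ j * real (h choose j) * ((real i - 1 + real h) gchoose (p + h))
      * ((real i + real p) gchoose (p - h)) * (real j - real h) ^ (p + h) / fact h = 0"
  proof (cases "i + h = 0")
    case True
    with \<open>j \<in> {0..h}\<close> assms show ?thesis by simp
  next
    case False
    then obtain k where k: "i + h = Suc k" by (metis not0_implies_Suc)
    then have "real i + real h = real k + 1" by (metis of_nat_Suc of_nat_add add.commute)
    then have "real i - 1 + real h = real k" by linarith
    moreover have "k < p + h" using assms k by linarith
    ultimately show ?thesis by (simp add: of_nat_gbinomial_eq_0)
  qed
qed

text \<open>At x = -m only the summand h = m survives: for h < m the second binomial
  coefficient vanishes, for h > m the first one.\<close>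
lemma poly_stirling_poly_neg_of_nat:
  assumes "m \<le> p"
  shows "poly (stirling_poly p) (- real m) = real (Stirling (p + m) m)"
proof -
  let ?c = "\<lambda>h j. (-1) ^ j * real (h choose j) * (real j - real h) ^ (p + h) / fact h"
  have second: "- real m + real p = real (p - m)" using assms by (simp add: of_nat_diff)
  have "(\<Sum>j=0..h. (-1) ^ j * real (h choose j) * ((- real m - 1 + real h) gchoose (p + h))
          * ((- real m + real p) gchoose (p - h)) * (real j - real h) ^ (p + h) / fact h)
      = (if h = m then (-1) ^ (p + m) * (\<Sum>j=0..h. ?c h j) else 0)" for h
  proof (cases rule: linorder_cases[of h m])
    case less
    then have "(- real m + real p) gchoose (p - h) = 0"
      unfolding second using assms by (intro of_nat_gbinomial_eq_0) linarith
    with less show ?thesis by simp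
  next
    case equal
    have "(- real m + real p) gchoose (p - h) = 1"
      unfolding second equal by (simp flip: binomial_gbinomial)
    moreover have "(- real m - 1 + real h) gchoose (p + h) = (-1) ^ (p + m)"
      using equal gbinomial_minus_one[of "p + m", where 'a = real] by simp
    ultimately show ?thesis
      using equal by (simp add: sum_distrib_left algebra_simps)
  next
    case greater
    then obtain d where "h = Suc (m + d)" using less_imp_Suc_add by blast
    then have "(- real m - 1 + real h) gchoose (p + h) = 0"
      using of_nat_gbinomial_eq_0[of d "p + h", where 'a = real] by simp
    with greater show ?thesis by simp
  qed
  then have "poly (stirling_poly p) (- real m)
      = (\<Sum>h=0..p. if h = m then (-1) ^ (p + m) * (\<Sum>j=0..h. ?c h j) else 0)"
    unfolding poly_stirling_poly by (intro sum.cong refl)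
  also have "\<dots> = (-1) ^ (p + m) * (\<Sum>j=0..m. ?c m j)"
    using assms by simp
  also have "\<dots> = real (Stirling (p + m) m)"
    by (simp add: Stirling_alternating_sum flip: power_add)
  finally show ?thesis .
qed

text \<open>The number s(n, n - p) of permutations of [n] with n - p cycles; the guard keeps the
  truncated subtraction n - p from producing s(n, 0) when p > n.\<close>
definition stirling_rank :: "nat \<Rightarrow> nat \<Rightarrow> nat" where
  "stirling_rank p n = (if p \<le> n then stirling n (n - p) else 0)"

lemma stirling_rank_Suc_Suc:
  "stirling_rank (Suc q) (Suc n) = stirling_rank (Suc q) n + n * stirling_rank q n"
proof (cases "Suc q \<le> n")
  case True
  then have "Suc n - Suc q = Suc (n - Suc q)" "n - q = Suc (n - Suc q)" by auto
  with True show ?thesis unfolding stirling_rank_def by simp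
next
  case False
  then show ?thesis unfolding stirling_rank_def by (cases "q = n"; cases n) auto
qed

lemma Stirling_Suc_add_Suc:
  "Stirling (Suc q + Suc m) (Suc m) = Suc m * Stirling (q + Suc m) (Suc m) + Stirling (Suc q + m) m"
  by (metis Stirling.simps(4) add_Suc add_Suc_shift)

lemma stirling_poly_shift_at_neg_of_nat:
  assumes "poly (stirling_poly q) (- real m) = real (Stirling (q + m) m)" "1 \<le> m" "m \<le> Suc q"
  shows "poly (stirling_poly (Suc q)) (- real m + 1)
    = poly (stirling_poly (Suc q)) (- real m) + (- real m) * poly (stirling_poly q) (- real m)"
proof -
  obtain k where m: "m = Suc k" using assms(2) by (cases m) auto
  have "- real m + 1 = - real k" using m by simp
  then have "poly (stirling_poly (Suc q)) (- real m + 1) = real (Stirling (Suc q + k) k)"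
    using poly_stirling_poly_neg_of_nat[of k "Suc q"] m assms(3) by simp
  also have "\<dots> = real (Stirling (Suc q + m) m) - real m * real (Stirling (q + m) m)"
    unfolding m Stirling_Suc_add_Suc by (simp del: Stirling.simps add: algebra_simps)
  finally show ?thesis
    using poly_stirling_poly_neg_of_nat[of m "Suc q"] assms by simp
qed

lemma stirling_poly_shift_at_of_nat:
  assumes "poly (stirling_poly q) (real n) = real (stirling_rank q n)" "n \<le> q"
  shows "poly (stirling_poly (Suc q)) (real n + 1)
    = poly (stirling_poly (Suc q)) (real n) + real n * poly (stirling_poly q) (real n)"
proof -
  have "n * stirling_rank q n = 0"
    using assms(2) by (cases "n = q"; cases n) (auto simp: stirling_rank_def)
  moreover have "poly (stirling_poly (Suc q)) (real (Suc n)) = 0"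
    and "poly (stirling_poly (Suc q)) (real n) = 0"
    using assms(2) by (simp_all only: poly_stirling_poly_of_nat_eq_0)
  ultimately show ?thesis using assms(1) by (simp add: add.commute)
qed

lemma stirling_poly_shift:
  assumes neg: "\<And>m. poly (stirling_poly q) (- real m) = real (Stirling (q + m) m)"
    and nat: "\<And>n. poly (stirling_poly q) (real n) = real (stirling_rank q n)"
  shows "poly (stirling_poly (Suc q)) (x + 1)
    = poly (stirling_poly (Suc q)) x + x * poly (stirling_poly q) x"
proof -
  define V where "V = pcompose (stirling_poly (Suc q)) [:1, 1:] - stirling_poly (Suc q)
    - [:0, 1:] * stirling_poly q"
  have poly_V: "poly V x = poly (stirling_poly (Suc q)) (x + 1) - poly (stirling_poly (Suc q)) x
      - x * poly (stirling_poly q) x" for x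
    unfolding V_def by (simp add: poly_pcompose algebra_simps)
  have "degree V \<le> 2 * q + 1"
    unfolding V_def
  proof (rule degree_diff_le)
    show "degree (pcompose (stirling_poly (Suc q)) [:1, 1:] - stirling_poly (Suc q)) \<le> 2 * q + 1"
      using degree_shift_diff_le[of "stirling_poly (Suc q)" 1] degree_stirling_poly[of "Suc q"]
      by simp
    show "degree ([:0, 1:] * stirling_poly q) \<le> 2 * q + 1"
      using degree_mult_le[of "[:0, 1:]" "stirling_poly q"] degree_stirling_poly[of q] by simp
  qed
  define Z where "Z = real_of_int ` {- int (Suc q)..<int (Suc q)}"
  have "card Z = 2 * Suc q" unfolding Z_def by (subst card_image) (auto simp: inj_on_def)
  moreover have "poly V z = 0" if "z \<in> Z" for z
  proof -
    obtain i where i: "- int (Suc q) \<le> i" "i < int (Suc q)" "z = real_of_int i"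
      using \<open>z \<in> Z\<close> unfolding Z_def by auto
    show ?thesis
    proof (cases "i < 0")
      case True
      then have "z = - real (nat (- i))" using i by simp
      then show ?thesis
        unfolding poly_V using stirling_poly_shift_at_neg_of_nat[OF neg, of "nat (- i)"] True i
        by simp
    next
      case False
      then have "z = real (nat i)" using i by simp
      then show ?thesis
        unfolding poly_V using stirling_poly_shift_at_of_nat[OF nat, of "nat i"] False i by simp
    qed
  qed
  ultimately have "V = 0"
    using \<open>degree V \<le> 2 * q + 1\<close> by (intro poly_eqI_degree[of Z]) auto
  then show ?thesis using poly_V[of x] by simp
qed

lemma poly_stirling_poly_of_nat_Suc:
  assumes shift: "\<And>x. poly (stirling_poly (Suc q)) (x + 1)
      = poly (stirling_poly (Suc q)) x + x * poly (stirling_poly q) x"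
    and nat: "\<And>n. poly (stirling_poly q) (real n) = real (stirling_rank q n)"
  shows "poly (stirling_poly (Suc q)) (real n) = real (stirling_rank (Suc q) n)"
proof (induction n)
  case 0
  then show ?case using poly_stirling_poly_of_nat_eq_0[of "Suc q" 0] by (simp add: stirling_rank_def)
next
  case (Suc n)
  then show ?case
    using shift[of "real n"] nat[of n] by (simp add: stirling_rank_Suc_Suc add.commute)
qed

lemma poly_stirling_poly_neg_of_nat_Suc:
  assumes shift: "\<And>x. poly (stirling_poly (Suc q)) (x + 1)
      = poly (stirling_poly (Suc q)) x + x * poly (stirling_poly q) x"
    and neg: "\<And>m. poly (stirling_poly q) (- real m) = real (Stirling (q + m) m)"
  shows "poly (stirling_poly (Suc q)) (- real m) = real (Stirling (Suc q + m) m)"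
proof (induction m)
  case 0
  then show ?case using poly_stirling_poly_neg_of_nat[of 0 "Suc q"] by simp
next
  case (Suc m)
  have "poly (stirling_poly (Suc q)) (- real (Suc m))
      = poly (stirling_poly (Suc q)) (- real m) + real (Suc m) * real (Stirling (q + Suc m) (Suc m))"
    using shift[of "- real (Suc m)"] neg[of "Suc m"] by (simp del: Stirling.simps add: algebra_simps)
  also have "\<dots> = real (Stirling (Suc q + Suc m) (Suc m))"
    unfolding Suc.IH Stirling_Suc_add_Suc by (simp del: Stirling.simps add: algebra_simps)
  finally show ?case .
qed

lemma poly_stirling_poly_values:
  "poly (stirling_poly p) (real n) = real (stirling_rank p n)
    \<and> poly (stirling_poly p) (- real m) = real (Stirling (p + m) m)"
proof (induction p arbitrary: n m)
  case 0
  then show ?case by (simp add: poly_stirling_poly_0 stirling_rank_def)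
next
  case (Suc q)
  then have "poly (stirling_poly (Suc q)) (x + 1)
      = poly (stirling_poly (Suc q)) x + x * poly (stirling_poly q) x" for x
    by (intro stirling_poly_shift) blast+
  with Suc.IH show ?case
    by (blast intro: poly_stirling_poly_of_nat_Suc poly_stirling_poly_neg_of_nat_Suc)
qed

lemma poly_stirling_poly_of_nat:
  assumes "1 \<le> n"
  shows "poly (stirling_poly p) (real n) = (\<Sum>h=0..p. \<Sum>j=0..h.
     (-1) ^ j * real (h choose j) * real ((n - 1 + h) choose (p + h))
     * real ((n + p) choose (p - h)) * (real j - real h) ^ (p + h) / fact h)"
  using assms unfolding poly_stirling_poly
  by (simp add: binomial_gbinomial of_nat_diff diff_add_eq)

theorem mainTheorem2:
  fixes n p :: nat
  assumes "n \<ge> 1" and "p \<le> n - 1"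
  shows "D n p = {\<sigma> \<in> permutations_of_set {1..n}. non_lrmax \<sigma> = p}
       \<and> card (D n p) = stirling n (n - p)
       \<and> real (card (D n p)) =
           (\<Sum>h=0..p. \<Sum>j=0..h.
              (-1) ^ j * real (h choose j) * real ((n - 1 + h) choose (p + h))
              * real ((n + p) choose (p - h)) * (real j - real h) ^ (p + h) / fact h)"
proof -
  have "p \<le> n" using assms by simp
  have card: "card (D n p) = stirling n (n - p)"
    unfolding D_eq_non_lrmax using card_non_lrmax_eq_stirling[OF \<open>p \<le> n\<close>] .
  then have "real (card (D n p)) = poly (stirling_poly p) (real n)"
    using poly_stirling_poly_values[of p n 0] \<open>p \<le> n\<close> by (simp add: stirling_rank_def)
  then show ?thesis
    using D_eq_non_lrmax card poly_stirling_poly_of_nat[OF assms(1)] by simp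
qed

end
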